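(* With the setting in the context, call two operators $Q_m,Q_{m'}$ with $m,m'\in\ker(\delta_0)$ equivalent if they have the same eigenvalue on every ground state $\mathcal A_0|f\rangle$, $f\in\ker(\delta^0)$ (equivalently, $m$ and $m'$ agree on $\ker(\delta^0)$). Then the assignment sending $Q_m$ to the character $\bar m:H^0(C,G)\to U(1)$, $\bar m([f])=m(f)$, is well defined and induces a bijection between the set of equivalence classes of such operators and the character group $\widehat{H^0(C,G)}=\mathrm{Hom}(H^0(C,G),U(1))$.
   Context: $(C_\bullet,\partial^C_\bullet)$ is a chain complex with each $C_n$ free abelian on a finite set $K_n$, $K_n\ne\emptyset$ for finitely many $n$; $(G_\bullet,\partial^G_\bullet)$ is a chain complex of finite abelian groups. $\mathrm{hom}(C,G)^p=\prod_n\mathrm{Hom}(C_n,G_{n-p})$ with $(\delta^pf)_n=f_{n-1}\partial^C_n-(-1)^p\partial^G_{n-p}f_n$, and $H^0(C,G)=\ker\delta^0/\mathrm{im}\,\delta^{-1}$. $\mathrm{hom}(C,G)_p=\mathrm{Hom}(\mathrm{hom}(C,G)^p,U(1))$ (written additively), $\delta_0:\mathrm{hom}(C,G)_0\to\mathrm{hom}(C,G)_{-1}$, $\delta_0m=m\circ\delta^{-1}$. $\mathcal H=\bigotimes_n\bigotimes_{x\in K_n}\mathbb C[G_n]$ with orthonormal basis $|f\rangle$, $f\in\mathrm{hom}(C,G)^0$. $Q_m|f\rangle=m(f)|f\rangle$, $P_t|f\rangle=|f+t\rangle$, and $\mathcal A_0=\frac1{|\mathrm{hom}(C,G)^{-1}|}\sum_{t\in\mathrm{hom}(C,G)^{-1}}P_{\delta^{-1}t}$.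 *)

theory Defs
  imports Complex_Main "HOL-Algebra.Algebra"
begin

text \<open>The chain complex C has C_n free abelian on the finite set K n; its boundary
  \<partial>^C_n is encoded by the integer matrix d: for x in K n,
  \<partial>^C_n x = sum over y in K (n-1) of (d n x y) y.  The finite abelian groups G_n are
  HOL-Algebra groups (written multiplicatively), with boundaries dG n : G n \<rightarrow> G (n-1).
  A homomorphism C_n \<rightarrow> G_(n-p) is determined by its values on the basis K n, so an element
  of hom(C,G)^p is an (extensional) function f with f n x in G (n-p) for x in K n.\<close>

definition chain_setting ::
  "(int \<Rightarrow> 'k set) \<Rightarrow> (int \<Rightarrow> 'k \<Rightarrow> 'k \<Rightarrow> int) \<Rightarrow> (int \<Rightarrow> ('g,'b) monoid_scheme) \<Rightarrow> (int \<Rightarrow> 'g \<Rightarrow> 'g) \<Rightarrow> bool"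
  where
  "chain_setting K d G dG \<longleftrightarrow>
     (\<forall>n. finite (K n)) \<and> finite {n. K n \<noteq> {}} \<and>
     (\<forall>n x z. x \<in> K n \<longrightarrow> z \<in> K (n - 2) \<longrightarrow> (\<Sum>y\<in>K (n - 1). d n x y * d (n - 1) y z) = 0) \<and>
     (\<forall>n. comm_group (G n) \<and> finite (carrier (G n))) \<and>
     (\<forall>n. dG n \<in> hom (G n) (G (n - 1))) \<and>
     (\<forall>n. \<forall>g\<in>carrier (G n). dG (n - 1) (dG n g) = \<one>\<^bsub>G (n - 2)\<^esub>)"

definition cochains :: "(int \<Rightarrow> 'k set) \<Rightarrow> (int \<Rightarrow> ('g,'b) monoid_scheme) \<Rightarrow> int \<Rightarrow> (int \<Rightarrow> 'k \<Rightarrow> 'g) set"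
  where
  "cochains K G p = {f. \<forall>n x. (x \<in> K n \<longrightarrow> f n x \<in> carrier (G (n - p))) \<and> (x \<notin> K n \<longrightarrow> f n x = undefined)}"

definition cochain_group :: "(int \<Rightarrow> 'k set) \<Rightarrow> (int \<Rightarrow> ('g,'b) monoid_scheme) \<Rightarrow> int \<Rightarrow> (int \<Rightarrow> 'k \<Rightarrow> 'g) monoid"
  where
  "cochain_group K G p =
     \<lparr>carrier = cochains K G p,
      monoid.mult = (\<lambda>f h n x. if x \<in> K n then f n x \<otimes>\<^bsub>G (n - p)\<^esub> h n x else undefined),
      monoid.one = (\<lambda>n x. if x \<in> K n then \<one>\<^bsub>G (n - p)\<^esub> else undefined)\<rparr>"

definition sign_pow :: "int \<Rightarrow> int" where
  "sign_pow p = (if even p then 1 else -1)"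

text \<open>(\<delta>^p f)_n = f_(n-1) \<partial>^C_n - (-1)^p \<partial>^G_(n-p) f_n, evaluated on basis elements x of C_n\<close>
definition coboundary ::
  "(int \<Rightarrow> 'k set) \<Rightarrow> (int \<Rightarrow> 'k \<Rightarrow> 'k \<Rightarrow> int) \<Rightarrow> (int \<Rightarrow> ('g,'b) monoid_scheme) \<Rightarrow> (int \<Rightarrow> 'g \<Rightarrow> 'g)
    \<Rightarrow> int \<Rightarrow> (int \<Rightarrow> 'k \<Rightarrow> 'g) \<Rightarrow> (int \<Rightarrow> 'k \<Rightarrow> 'g)"
  where
  "coboundary K d G dG p f = (\<lambda>n x. if x \<in> K n then
      (\<Otimes>\<^bsub>G (n - p - 1)\<^esub>y\<in>K (n - 1). f (n - 1) y [^]\<^bsub>G (n - p - 1)\<^esub> d n x y)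
      \<otimes>\<^bsub>G (n - p - 1)\<^esub> (dG (n - p) (f n x) [^]\<^bsub>G (n - p - 1)\<^esub> (- sign_pow p))
    else undefined)"

definition cocycles0 where
  "cocycles0 K d G dG = {f \<in> cochains K G 0. coboundary K d G dG 0 f = \<one>\<^bsub>cochain_group K G 1\<^esub>}"

definition coboundaries0 where
  "coboundaries0 K d G dG = coboundary K d G dG (-1) ` cochains K G (-1)"

definition H0_group where
  "H0_group K d G dG = ((cochain_group K G 0)\<lparr>carrier := cocycles0 K d G dG\<rparr>) Mod coboundaries0 K d G dG"

definition U1 :: "complex monoid" where
  "U1 = \<lparr>carrier = {z. cmod z = 1}, monoid.mult = (*), monoid.one = 1\<rparr>"

definition characters :: "('a,'c) monoid_scheme \<Rightarrow> ('a \<Rightarrow> complex) set" where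
  "characters H = hom H U1 \<inter> extensional (carrier H)"

text \<open>ker \<delta>_0 inside hom(C,G)_0 = Hom(hom(C,G)^0, U(1)); \<delta>_0 m = m \<circ> \<delta>^{-1}\<close>
definition ker_dual0 where
  "ker_dual0 K d G dG = {m \<in> characters (cochain_group K G 0).
      \<forall>t\<in>cochains K G (-1). m (coboundary K d G dG (-1) t) = 1}"

text \<open>The Hilbert space: functions hom(C,G)^0 \<rightarrow> \<complex> (vanishing outside); |f> is ket f.\<close>
definition ket :: "'a \<Rightarrow> 'a \<Rightarrow> complex" where
  "ket f = (\<lambda>g. if g = f then 1 else 0)"

definition Qop :: "'a set \<Rightarrow> ('a \<Rightarrow> complex) \<Rightarrow> ('a \<Rightarrow> complex) \<Rightarrow> ('a \<Rightarrow> complex)" where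
  "Qop S m \<psi> = (\<lambda>g. if g \<in> S then m g * \<psi> g else 0)"

text \<open>P_t |f> = |f + t> (group written multiplicatively)\<close>
definition Pop :: "('a,'c) monoid_scheme \<Rightarrow> 'a \<Rightarrow> ('a \<Rightarrow> complex) \<Rightarrow> ('a \<Rightarrow> complex)" where
  "Pop H t \<psi> = (\<lambda>g. if g \<in> carrier H then \<psi> (g \<otimes>\<^bsub>H\<^esub> inv\<^bsub>H\<^esub> t) else 0)"

definition A0 where
  "A0 K d G dG \<psi> = (\<lambda>g. (\<Sum>t\<in>cochains K G (-1).
       Pop (cochain_group K G 0) (coboundary K d G dG (-1) t) \<psi> g) / of_nat (card (cochains K G (-1))))"

definition Qops where
  "Qops K d G dG = Qop (cochains K G 0) ` ker_dual0 K d G dG"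

definition same_ground_eigenvalue where
  "same_ground_eigenvalue K d G dG Q Q' \<longleftrightarrow>
     (\<forall>f\<in>cocycles0 K d G dG. \<exists>c::complex.
        Q (A0 K d G dG (ket f)) = (\<lambda>g. c * A0 K d G dG (ket f) g) \<and>
        Q' (A0 K d G dG (ket f)) = (\<lambda>g. c * A0 K d G dG (ket f) g))"

definition Qrel where
  "Qrel K d G dG = {(Q, Q'). Q \<in> Qops K d G dG \<and> Q' \<in> Qops K d G dG \<and> same_ground_eigenvalue K d G dG Q Q'}"

definition mbar where
  "mbar K d G dG m = (\<lambda>c\<in>carrier (H0_group K d G dG). m (SOME f. f \<in> c))"

end

theory Submission
  imports Defs
begin

text \<open>
  On a ground state \<open>A\<^sub>0|f\<rangle>\<close>, a superposition of the states \<open>|f + \<delta>\<^sup>-\<^sup>1 t\<rangle>\<close>, the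
  operator \<open>Q\<^sub>m\<close> with \<open>m \<in> ker \<delta>\<^sub>0\<close> acts by the scalar \<open>m(f)\<close>, because \<open>m\<close> is trivial on
  coboundaries; as the coefficient of \<open>|f\<rangle>\<close> in \<open>A\<^sub>0|f\<rangle>\<close> is nonzero, \<open>Q\<^sub>m\<close> and \<open>Q\<^sub>m\<^sub>'\<close>
  are equivalent iff \<open>m\<close> and \<open>m'\<close> agree on cocycles, i.e. iff \<open>m\<close> and \<open>m'\<close> induce the
  same character of \<open>H\<^sup>0(C,G)\<close>. Every character of \<open>H\<^sup>0\<close> is induced: pulled back to the
  cocycles it extends to all of \<open>hom(C,G)\<^sup>0\<close>, since characters of a subgroup of a finite
  abelian group extend, one generator at a time, by choosing an \<open>N\<close>-th root of unity.
\<close>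

lemma quotient_bij_betw_image:
  assumes R: "R \<subseteq> g ` M \<times> g ` M"
    and iff: "\<And>m m'. m \<in> M \<Longrightarrow> m' \<in> M \<Longrightarrow> (g m, g m') \<in> R \<longleftrightarrow> f m = f m'"
  shows "equiv (g ` M) R"
    and "\<And>m. m \<in> M \<Longrightarrow> the_elem (f ` (M \<inter> g -` R `` {g m})) = f m"
    and "bij_betw (\<lambda>U. the_elem (f ` (M \<inter> g -` U))) (g ` M // R) (f ` M)"
proof -
  show equiv: "equiv (g ` M) R"
  proof (rule equivI)
    show "refl_on (g ` M) R" using R iff by (auto simp: refl_on_def)
    show "sym R" using R iff by (fastforce intro: symI)
    show "trans R"
    proof (rule transI)
      fix a b c assume ab: "(a, b) \<in> R" and bc: "(b, c) \<in> R"
      then obtain ma mb mc where "ma \<in> M" "mb \<in> M" "mc \<in> M" "a = g ma" "b = g mb" "c = g mc"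
        using R by blast
      with ab bc iff show "(a, c) \<in> R" by simp
    qed
  qed (rule R)
  show class_value: "the_elem (f ` (M \<inter> g -` R `` {g m})) = f m" if m: "m \<in> M" for m
  proof -
    have "M \<inter> g -` R `` {g m} = {m' \<in> M. f m' = f m}"
      using R iff m by auto
    then have "f ` (M \<inter> g -` R `` {g m}) = {f m}" using m by auto
    then show ?thesis by simp
  qed
  show "bij_betw (\<lambda>U. the_elem (f ` (M \<inter> g -` U))) (g ` M // R) (f ` M)"
  proof (rule bij_betw_imageI)
    show "inj_on (\<lambda>U. the_elem (f ` (M \<inter> g -` U))) (g ` M // R)"
    proof (rule inj_onI)
      fix U V
      assume U: "U \<in> g ` M // R" and V: "V \<in> g ` M // R"
        and eq: "the_elem (f ` (M \<inter> g -` U)) = the_elem (f ` (M \<inter> g -` V))"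
      from U obtain m where m: "m \<in> M" "U = R `` {g m}" by (auto elim!: quotientE)
      from V obtain m' where m': "m' \<in> M" "V = R `` {g m'}" by (auto elim!: quotientE)
      have "(g m, g m') \<in> R" using eq class_value iff m m' by simp
      then show "U = V" unfolding m(2) m'(2) by (rule equiv_class_eq[OF equiv])
    qed
    show "(\<lambda>U. the_elem (f ` (M \<inter> g -` U))) ` (g ` M // R) = f ` M"
    proof
      show "(\<lambda>U. the_elem (f ` (M \<inter> g -` U))) ` (g ` M // R) \<subseteq> f ` M"
        by (auto simp: quotient_def class_value)
      show "f ` M \<subseteq> (\<lambda>U. the_elem (f ` (M \<inter> g -` U))) ` (g ` M // R)"
      proof
        fix y assume "y \<in> f ` M"
        then obtain m where m: "m \<in> M" and y: "y = f m" by blast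
        then have "R `` {g m} \<in> g ` M // R" by (intro quotientI) simp
        with m y class_value show "y \<in> (\<lambda>U. the_elem (f ` (M \<inter> g -` U))) ` (g ` M // R)"
          by (metis image_eqI)
      qed
    qed
  qed
qed

context comm_group begin

lemma finprod_int_pow:
  assumes "f \<in> A \<rightarrow> carrier G"
  shows "(\<Otimes>y\<in>A. f y) [^] (i::int) = (\<Otimes>y\<in>A. f y [^] i)"
  using assms
proof (induct A rule: infinite_finite_induct)
  case (insert a A)
  then have "(\<lambda>y. f y [^] i) \<in> A \<rightarrow> carrier G" by auto
  with insert show ?case by (simp add: int_pow_distrib)
qed auto

lemma finprod_int_pow_sum:
  assumes "x \<in> carrier G"
  shows "(\<Otimes>y\<in>A. x [^] (e y::int)) = x [^] (\<Sum>y\<in>A. e y)"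
proof (induct A rule: infinite_finite_induct)
  case (insert a A)
  have "(\<lambda>y. x [^] (e y::int)) \<in> A \<rightarrow> carrier G" using assms by auto
  with insert assms show ?case by (simp add: int_pow_mult)
qed auto

lemma finprod_swap:
  assumes "\<And>y z. y \<in> A \<Longrightarrow> z \<in> B \<Longrightarrow> f y z \<in> carrier G"
  shows "(\<Otimes>y\<in>A. \<Otimes>z\<in>B. f y z) = (\<Otimes>z\<in>B. \<Otimes>y\<in>A. f y z)"
  using assms
proof (induct A rule: infinite_finite_induct)
  case (infinite A)
  then show ?case by (simp add: finprod_one_eqI)
next
  case (insert a A)
  have "(\<lambda>y. \<Otimes>z\<in>B. f y z) \<in> A \<rightarrow> carrier G" "(\<lambda>z. \<Otimes>y\<in>A. f y z) \<in> B \<rightarrow> carrier G"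
    using insert by (auto intro!: finprod_closed)
  with insert have "(\<Otimes>y\<in>insert a A. \<Otimes>z\<in>B. f y z) = (\<Otimes>z\<in>B. f a z \<otimes> (\<Otimes>y\<in>A. f y z))"
    by (simp add: Pi_def)
  also have "\<dots> = (\<Otimes>z\<in>B. \<Otimes>y\<in>insert a A. f y z)"
    using insert by (intro finprod_cong') (auto intro!: finprod_closed)
  finally show ?case .
qed simp

lemma finprod_boundary_boundary:
  fixes a :: "'i \<Rightarrow> int" and b :: "'i \<Rightarrow> 'j \<Rightarrow> int"
  assumes "T \<in> C \<rightarrow> carrier G"
    and "\<And>z. z \<in> C \<Longrightarrow> (\<Sum>y\<in>B. a y * b y z) = 0"
  shows "(\<Otimes>y\<in>B. (\<Otimes>z\<in>C. T z [^] b y z) [^] a y) = \<one>"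
proof -
  have "(\<Otimes>z\<in>C. T z [^] b y z) [^] a y = (\<Otimes>z\<in>C. T z [^] (a y * b y z))" for y
  proof -
    have "(\<Otimes>z\<in>C. T z [^] b y z) [^] a y = (\<Otimes>z\<in>C. (T z [^] b y z) [^] a y)"
      using assms(1) finprod_int_pow[of "\<lambda>z. T z [^] b y z" C "a y"] by auto
    also have "\<dots> = (\<Otimes>z\<in>C. T z [^] (a y * b y z))"
      using assms(1) by (intro finprod_cong') (auto simp: int_pow_pow mult.commute Pi_iff)
    finally show ?thesis .
  qed
  then have "(\<Otimes>y\<in>B. (\<Otimes>z\<in>C. T z [^] b y z) [^] a y) = (\<Otimes>y\<in>B. \<Otimes>z\<in>C. T z [^] (a y * b y z))"
    by simp
  also have "\<dots> = (\<Otimes>z\<in>C. \<Otimes>y\<in>B. T z [^] (a y * b y z))"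
    using assms(1) by (intro finprod_swap) auto
  also have "\<dots> = (\<Otimes>z\<in>C. T z [^] (\<Sum>y\<in>B. a y * b y z))"
    using assms(1) by (intro finprod_cong') (auto simp: finprod_int_pow_sum Pi_iff)
  also have "\<dots> = \<one>" using assms(2) by (simp add: finprod_one_eqI)
  finally show ?thesis .
qed

end

lemma hom_finprod:
  assumes "comm_group H" "comm_group H'" "h \<in> hom H H'" "f \<in> A \<rightarrow> carrier H"
  shows "h (finprod H f A) = finprod H' (\<lambda>y. h (f y)) A"
proof -
  interpret H: comm_group H by fact
  interpret H': comm_group H' by fact
  interpret group_hom H H' h
    using assms by (simp add: group_hom_def group_hom_axioms_def H.group_axioms H'.group_axioms)
  from assms(4) show ?thesis
  proof (induct A rule: infinite_finite_induct)
    case (insert a A)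
    then have "(\<lambda>y. h (f y)) \<in> A \<rightarrow> carrier H'" by (auto intro: hom_closed)
    with insert show ?case by (simp add: Pi_def)
  qed auto
qed

section \<open>Extending characters of finite abelian groups\<close>

lemma unimodular_nth_root:
  assumes "cmod z = 1" "N > 0"
  shows "\<exists>w. cmod w = 1 \<and> w ^ N = z"
proof (intro exI conjI)
  have "z \<noteq> 0" using assms by auto
  show "cmod (cis (Arg z / real N)) = 1" by simp
  have "cis (Arg z / real N) ^ N = cis (Arg z)" using assms by (simp add: DeMoivre)
  also have "\<dots> = z" using cis_Arg[OF \<open>z \<noteq> 0\<close>] assms by (simp add: sgn_eq)
  finally show "cis (Arg z / real N) ^ N = z" .
qed

definition character_on :: "('a,'c) monoid_scheme \<Rightarrow> 'a set \<Rightarrow> ('a \<Rightarrow> complex) \<Rightarrow> bool" where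
  "character_on G H \<psi> \<longleftrightarrow>
     (\<forall>x\<in>H. cmod (\<psi> x) = 1) \<and> (\<forall>x\<in>H. \<forall>y\<in>H. \<psi> (x \<otimes>\<^bsub>G\<^esub> y) = \<psi> x * \<psi> y)"

lemma U1_simps [simp]: "carrier U1 = {z. cmod z = 1}" "x \<otimes>\<^bsub>U1\<^esub> y = x * y" "\<one>\<^bsub>U1\<^esub> = 1"
  by (simp_all add: U1_def)

lemma characters_iff:
  "\<chi> \<in> characters A \<longleftrightarrow> character_on A (carrier A) \<chi> \<and> \<chi> \<in> extensional (carrier A)"
  by (auto simp: characters_def character_on_def hom_def)

context group begin

lemma character_on_one:
  assumes "subgroup H G" "character_on G H \<psi>"
  shows "\<psi> \<one> = 1"
proof -
  have one: "\<one> \<in> H" using assms(1) by (rule subgroup.one_closed)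
  then have "\<psi> \<one> = \<psi> \<one> * \<psi> \<one>" "\<psi> \<one> \<noteq> 0"
    using assms(2) unfolding character_on_def by (metis l_one subgroup.mem_carrier[OF assms(1)], force)
  then show ?thesis by simp
qed

lemma character_on_int_pow:
  assumes H: "subgroup H G" and \<psi>: "character_on G H \<psi>" and x: "x \<in> H"
  shows "\<psi> (x [^] (k::int)) = \<psi> x powi k"
proof -
  have mult: "\<And>y z. y \<in> H \<Longrightarrow> z \<in> H \<Longrightarrow> \<psi> (y \<otimes> z) = \<psi> y * \<psi> z"
    using \<psi> unfolding character_on_def by blast
  have xG: "x \<in> carrier G" using H x by (rule subgroup.mem_carrier)
  have nat_pow: "\<psi> (x [^] n) = \<psi> x ^ n" for n :: nat
  proof (induct n)
    case 0 then show ?case using character_on_one[OF H \<psi>] by simp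
  next
    case (Suc n)
    have "x [^] n \<in> H" using subgroup_int_pow_closed[OF H x, of "int n"] xG by (simp add: int_pow_int)
    with Suc show ?case using mult x by simp
  qed
  have neg_pow: "\<psi> (x [^] (- int n)) = \<psi> x powi (- int n)" for n :: nat
  proof -
    have xn: "x [^] n \<in> H" using subgroup_int_pow_closed[OF H x, of "int n"] xG by (simp add: int_pow_int)
    have "\<psi> (inv (x [^] n)) * \<psi> (x [^] n) = 1"
      using mult[OF subgroup.m_inv_closed[OF H xn] xn] character_on_one[OF H \<psi>] xG by simp
    moreover have "\<psi> x \<noteq> 0" using \<psi> x unfolding character_on_def by force
    ultimately have "\<psi> (inv (x [^] n)) = inverse (\<psi> x ^ n)"
      by (simp add: nat_pow field_simps)
    moreover have "x [^] (- int n) = inv (x [^] n)" using xG by (rule int_pow_neg_int)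
    moreover have "\<psi> x powi (- int n) = inverse (\<psi> x ^ n)"
      by (simp only: power_int_minus power_int_of_nat)
    ultimately show ?thesis by simp
  qed
  show ?thesis
  proof (cases "k \<ge> 0")
    case True
    then obtain n where "k = int n" using nonneg_int_cases by blast
    then show ?thesis using nat_pow[of n] by (simp only: int_pow_int power_int_of_nat)
  next
    case False
    then have "k = - int (nat (- k))" by simp
    then show ?thesis using neg_pow by metis
  qed
qed

lemma subgroup_pow_period:
  assumes fin: "finite (carrier G)" and H: "subgroup H G" and a: "a \<in> carrier G"
  obtains N :: nat where "N > 0" "\<And>j::int. a [^] j \<in> H \<longleftrightarrow> int N dvd j"
proof -
  define S where "S = {k::nat. 0 < k \<and> a [^] k \<in> H}"
  have "ord a \<in> S"
    unfolding S_def using ord_ge_1[OF fin a] pow_ord_eq_1[OF a] subgroup.one_closed[OF H] by auto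
  define N where "N = (LEAST k. k \<in> S)"
  have "N \<in> S" unfolding N_def by (rule LeastI) fact
  then have N: "N > 0" "a [^] int N \<in> H" unfolding S_def by (auto simp: int_pow_int)
  have N_min: "a [^] k \<notin> H" if "0 < k" "k < N" for k :: nat
    using not_less_Least[of k "\<lambda>k. k \<in> S"] that unfolding N_def S_def by blast
  have "a [^] j \<in> H \<longleftrightarrow> int N dvd j" for j :: int
  proof
    assume j: "a [^] j \<in> H"
    define q r where "q = j div int N" and "r = j mod int N"
    have "a [^] j = (a [^] int N) [^] q \<otimes> a [^] r"
      using a by (simp add: int_pow_pow int_pow_mult[symmetric] q_def r_def)
    then have "a [^] r = inv ((a [^] int N) [^] q) \<otimes> a [^] j"
      using a by (simp add: inv_solve_left)
    also have "\<dots> \<in> H"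
      using subgroup.m_closed[OF H subgroup.m_inv_closed[OF H subgroup_int_pow_closed[OF H N(2)]] j] .
    finally have "a [^] nat r \<in> H" using N(1) by (simp add: r_def int_pow_int[symmetric])
    moreover have "nat r < N" using N(1) by (simp add: r_def nat_less_iff)
    ultimately have "\<not> 0 < nat r" using N_min by blast
    moreover have "r \<ge> 0" using N(1) by (simp add: r_def)
    ultimately have "r = 0" by simp
    then show "int N dvd j" by (simp add: r_def mod_eq_0_iff_dvd)
  next
    assume "int N dvd j"
    then obtain q where "j = int N * q" by blast
    then show "a [^] j \<in> H" using H N(2) a by (simp add: int_pow_pow[symmetric] subgroup_int_pow_closed)
  qed
  with N(1) show ?thesis by (rule that)
qed

end

context comm_group begin

lemma subgroup_adjoin:
  assumes H: "subgroup H G" and a: "a \<in> carrier G"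
  shows "subgroup {h \<otimes> a [^] (k::int) |h k. h \<in> H} G"
proof (rule subgroupI)
  have HG: "\<And>h. h \<in> H \<Longrightarrow> h \<in> carrier G" using H by (rule subgroup.mem_carrier)
  show "{h \<otimes> a [^] (k::int) |h k. h \<in> H} \<subseteq> carrier G" using HG a by auto
  have "\<one> = \<one> \<otimes> a [^] (0::int)" by simp
  then show "{h \<otimes> a [^] (k::int) |h k. h \<in> H} \<noteq> {}" using subgroup.one_closed[OF H] by blast
next
  fix y assume "y \<in> {h \<otimes> a [^] (k::int) |h k. h \<in> H}"
  then obtain h k where h: "h \<in> H" and y: "y = h \<otimes> a [^] (k::int)" by blast
  have "inv y = inv h \<otimes> a [^] (- k)"
    using h a subgroup.mem_carrier[OF H h] by (simp add: y inv_mult int_pow_neg m_comm)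
  then show "inv y \<in> {h \<otimes> a [^] (k::int) |h k. h \<in> H}" using subgroup.m_inv_closed[OF H h] by blast
next
  fix y z assume "y \<in> {h \<otimes> a [^] (k::int) |h k. h \<in> H}" "z \<in> {h \<otimes> a [^] (k::int) |h k. h \<in> H}"
  then obtain h h' k k' where h: "h \<in> H" "h' \<in> H" and y: "y = h \<otimes> a [^] (k::int)"
    and z: "z = h' \<otimes> a [^] (k'::int)" by blast
  have "y \<otimes> z = (h \<otimes> h') \<otimes> a [^] (k + k')"
    using a subgroup.mem_carrier[OF H h(1)] subgroup.mem_carrier[OF H h(2)]
    by (simp add: y z int_pow_mult m_ac)
  then show "y \<otimes> z \<in> {h \<otimes> a [^] (k::int) |h k. h \<in> H}" using subgroup.m_closed[OF H h] by blast
qed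

lemma character_on_adjoin_well_defined:
  assumes H: "subgroup H G" and \<psi>: "character_on G H \<psi>" and a: "a \<in> carrier G"
    and period: "\<And>j::int. a [^] j \<in> H \<longleftrightarrow> int N dvd j"
    and w: "w \<noteq> 0" "w ^ N = \<psi> (a [^] int N)"
    and h: "h \<in> H" "h' \<in> H" and eq: "h \<otimes> a [^] k = h' \<otimes> a [^] (k'::int)"
  shows "\<psi> h * w powi k = \<psi> h' * w powi k'"
proof -
  have hG: "h \<in> carrier G" "h' \<in> carrier G" using H h by (auto intro: subgroup.mem_carrier)
  have "(h \<otimes> a [^] (k - k')) \<otimes> a [^] k' = h' \<otimes> a [^] k'"
    using eq a hG by (simp add: m_assoc int_pow_mult[symmetric])
  then have "h \<otimes> a [^] (k - k') = h'" using a hG by (simp add: r_cancel)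
  then have "a [^] (k - k') = inv h \<otimes> h'" using a hG by (simp add: inv_solve_left)
  then have "a [^] (k - k') \<in> H" using H h by (simp add: subgroup.m_closed subgroup.m_inv_closed)
  then obtain q where q: "k - k' = int N * q" using period by blast
  have "\<psi> (a [^] (k - k')) = \<psi> (a [^] int N) powi q"
    using character_on_int_pow[OF H \<psi>] period a by (simp add: q int_pow_pow[symmetric])
  also have "\<dots> = w powi (k - k')" using w by (simp add: q power_int_mult)
  finally have "\<psi> h' = \<psi> h * w powi (k - k')"
    using \<psi> h(1) \<open>a [^] (k - k') \<in> H\<close> \<open>h \<otimes> a [^] (k - k') = h'\<close>
    unfolding character_on_def by metis
  then show ?thesis using w by (simp add: power_int_diff field_simps)
qed

lemma character_on_adjoin:
  assumes fin: "finite (carrier G)" and H: "subgroup H G" and \<psi>: "character_on G H \<psi>"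
    and a: "a \<in> carrier G"
  obtains \<psi>' where "character_on G {h \<otimes> a [^] (k::int) |h k. h \<in> H} \<psi>'" "\<forall>x\<in>H. \<psi>' x = \<psi> x"
proof -
  obtain N where N: "N > 0" and period: "\<And>j::int. a [^] j \<in> H \<longleftrightarrow> int N dvd j"
    using subgroup_pow_period[OF fin H a] by blast
  have "cmod (\<psi> (a [^] int N)) = 1" using \<psi> period unfolding character_on_def by simp
  then obtain w where w1: "cmod w = 1" and wN: "w ^ N = \<psi> (a [^] int N)"
    using unimodular_nth_root N by blast
  then have w0: "w \<noteq> 0" by auto
  have HG: "\<And>h. h \<in> H \<Longrightarrow> h \<in> carrier G" using H by (rule subgroup.mem_carrier)
  have \<psi>_mult: "\<And>x y. x \<in> H \<Longrightarrow> y \<in> H \<Longrightarrow> \<psi> (x \<otimes> y) = \<psi> x * \<psi> y"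
    and \<psi>_norm: "\<And>x. x \<in> H \<Longrightarrow> cmod (\<psi> x) = 1" using \<psi> unfolding character_on_def by blast+
  define \<psi>' where "\<psi>' y = (let (h, k) = SOME (h, k). h \<in> H \<and> y = h \<otimes> a [^] (k::int) in \<psi> h * w powi k)"
    for y
  have \<psi>'_eq: "\<psi>' (h \<otimes> a [^] k) = \<psi> h * w powi k" if h: "h \<in> H" for h k
  proof -
    obtain h' k' where "(SOME (h', k'). h' \<in> H \<and> h \<otimes> a [^] k = h' \<otimes> a [^] (k'::int)) = (h', k')"
      by fastforce
    moreover have "\<exists>p. (\<lambda>(h', k'). h' \<in> H \<and> h \<otimes> a [^] k = h' \<otimes> a [^] (k'::int)) p"
      using h by blast
    ultimately have "h' \<in> H" "h \<otimes> a [^] k = h' \<otimes> a [^] k'" "\<psi>' (h \<otimes> a [^] k) = \<psi> h' * w powi k'"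
      using someI_ex[of "\<lambda>(h', k'). h' \<in> H \<and> h \<otimes> a [^] k = h' \<otimes> a [^] (k'::int)"]
      unfolding \<psi>'_def by auto
    then show ?thesis
      using character_on_adjoin_well_defined[OF H \<psi> a period w0 wN h] by simp
  qed
  have "character_on G {h \<otimes> a [^] (k::int) |h k. h \<in> H} \<psi>'"
    unfolding character_on_def
  proof (intro conjI ballI)
    fix y assume "y \<in> {h \<otimes> a [^] (k::int) |h k. h \<in> H}"
    then obtain h k where h: "h \<in> H" and y: "y = h \<otimes> a [^] (k::int)" by blast
    show "cmod (\<psi>' y) = 1" using \<psi>_norm[OF h] w1 by (simp add: y \<psi>'_eq[OF h] norm_mult norm_power_int)
  next
    fix y z assume "y \<in> {h \<otimes> a [^] (k::int) |h k. h \<in> H}" "z \<in> {h \<otimes> a [^] (k::int) |h k. h \<in> H}"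
    then obtain h h' k k' where h: "h \<in> H" "h' \<in> H" and y: "y = h \<otimes> a [^] (k::int)"
      and z: "z = h' \<otimes> a [^] (k'::int)" by blast
    have "y \<otimes> z = (h \<otimes> h') \<otimes> a [^] (k + k')"
      using a HG[OF h(1)] HG[OF h(2)] by (simp add: y z int_pow_mult m_ac)
    then show "\<psi>' (y \<otimes> z) = \<psi>' y * \<psi>' z"
      using subgroup.m_closed[OF H h] w0
      by (simp add: \<psi>'_eq y z h \<psi>_mult power_int_add)
  qed
  moreover have "\<forall>x\<in>H. \<psi>' x = \<psi> x" using \<psi>'_eq[of _ 0] HG by simp
  ultimately show ?thesis by (rule that)
qed

lemma character_on_extend:
  assumes fin: "finite (carrier G)" and "subgroup H G" "character_on G H \<psi>"
  shows "\<exists>\<chi>. character_on G (carrier G) \<chi> \<and> (\<forall>x\<in>H. \<chi> x = \<psi> x)"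
  using assms(2,3)
proof (induct "card (carrier G - H)" arbitrary: H \<psi> rule: less_induct)
  case less
  show ?case
  proof (cases "H = carrier G")
    case True
    then show ?thesis using less.prems by blast
  next
    case False
    then obtain a where a: "a \<in> carrier G" "a \<notin> H" using subgroup.subset[OF less.prems(1)] by blast
    let ?H' = "{h \<otimes> a [^] (k::int) |h k. h \<in> H}"
    obtain \<psi>' where \<psi>': "character_on G ?H' \<psi>'" "\<forall>x\<in>H. \<psi>' x = \<psi> x"
      using character_on_adjoin[OF fin less.prems a(1)] by blast
    have "H \<subseteq> ?H'"
    proof
      fix x assume x: "x \<in> H"
      then have "x = x \<otimes> a [^] (0::int)" using subgroup.mem_carrier[OF less.prems(1)] by simp
      with x show "x \<in> ?H'" by blast
    qed
    moreover have "a = \<one> \<otimes> a [^] (1::int)" using a(1) by simp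
    then have "a \<in> ?H'" using subgroup.one_closed[OF less.prems(1)] by blast
    ultimately have "carrier G - ?H' \<subset> carrier G - H" using a by blast
    then have "card (carrier G - ?H') < card (carrier G - H)"
      using fin by (intro psubset_card_mono) auto
    then obtain \<chi> where \<chi>: "character_on G (carrier G) \<chi>" "\<forall>x\<in>?H'. \<chi> x = \<psi>' x"
      using less.hyps subgroup_adjoin[OF less.prems(1) a(1)] \<psi>'(1) by blast
    have "\<chi> x = \<psi> x" if "x \<in> H" for x
      using bspec[OF \<chi>(2) subsetD[OF \<open>H \<subseteq> ?H'\<close> that]] bspec[OF \<psi>'(2) that] by simp
    with \<chi>(1) show ?thesis by blast
  qed
qed

end

section \<open>The cochain complex\<close>

lemma sign_pow_succ: "sign_pow (p + 1) = - sign_pow p"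
  by (simp add: sign_pow_def)

locale cochain_complex =
  fixes K :: "int \<Rightarrow> 'k set" and d :: "int \<Rightarrow> 'k \<Rightarrow> 'k \<Rightarrow> int"
    and G :: "int \<Rightarrow> ('g,'b) monoid_scheme" and dG :: "int \<Rightarrow> 'g \<Rightarrow> 'g"
  assumes chain_setting: "chain_setting K d G dG"
begin

abbreviation "C p \<equiv> cochain_group K G p"
abbreviation "\<delta> p \<equiv> coboundary K d G dG p"

lemma finite_K: "finite (K n)"
  and finite_degrees: "finite {n. K n \<noteq> {}}"
  and boundary_boundary: "x \<in> K n \<Longrightarrow> z \<in> K (n - 2) \<Longrightarrow> (\<Sum>y\<in>K (n - 1). d n x y * d (n - 1) y z) = 0"
  and comm_group_G: "comm_group (G n)"
  and finite_G: "finite (carrier (G n))"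
  and dG_hom: "dG n \<in> hom (G n) (G (n - 1))"
  and dG_dG: "g \<in> carrier (G n) \<Longrightarrow> dG (n - 1) (dG n g) = \<one>\<^bsub>G (n - 2)\<^esub>"
  using chain_setting unfolding chain_setting_def by blast+

lemma group_G: "group (G n)"
  using comm_group_G by (rule comm_group.axioms(2))

lemma dG_closed: "g \<in> carrier (G n) \<Longrightarrow> dG n g \<in> carrier (G (n - 1))"
  using dG_hom by (auto simp: hom_def)

lemma dG_mult: "g \<in> carrier (G n) \<Longrightarrow> h \<in> carrier (G n) \<Longrightarrow>
    dG n (g \<otimes>\<^bsub>G n\<^esub> h) = dG n g \<otimes>\<^bsub>G (n - 1)\<^esub> dG n h"
  using dG_hom by (rule hom_mult)

lemma dG_int_pow: "g \<in> carrier (G n) \<Longrightarrow> dG n (g [^]\<^bsub>G n\<^esub> (k::int)) = dG n g [^]\<^bsub>G (n - 1)\<^esub> k"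
  by (rule hom_int_pow[OF dG_hom _ group_G group_G])

lemma dG_finprod: "f \<in> A \<rightarrow> carrier (G n) \<Longrightarrow>
    dG n (\<Otimes>\<^bsub>G n\<^esub> y\<in>A. f y) = (\<Otimes>\<^bsub>G (n - 1)\<^esub> y\<in>A. dG n (f y))"
  using comm_group_G comm_group_G dG_hom by (rule hom_finprod)

lemma carrier_C [simp]: "carrier (C p) = cochains K G p"
  and mult_C: "f \<otimes>\<^bsub>C p\<^esub> h = (\<lambda>n x. if x \<in> K n then f n x \<otimes>\<^bsub>G (n - p)\<^esub> h n x else undefined)"
  and one_C: "\<one>\<^bsub>C p\<^esub> = (\<lambda>n x. if x \<in> K n then \<one>\<^bsub>G (n - p)\<^esub> else undefined)"
  by (simp_all add: cochain_group_def)

lemma cochainsD: "f \<in> cochains K G p \<Longrightarrow> x \<in> K n \<Longrightarrow> f n x \<in> carrier (G (n - p))"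
  and cochains_undefined: "f \<in> cochains K G p \<Longrightarrow> x \<notin> K n \<Longrightarrow> f n x = undefined"
  and cochainsI: "(\<And>n x. x \<in> K n \<Longrightarrow> f n x \<in> carrier (G (n - p))) \<Longrightarrow>
      (\<And>n x. x \<notin> K n \<Longrightarrow> f n x = undefined) \<Longrightarrow> f \<in> cochains K G p"
  by (simp_all add: cochains_def)

lemma comm_group_C: "comm_group (C p)"
proof (rule comm_groupI)
  fix f h k assume "f \<in> carrier (C p)" "h \<in> carrier (C p)" "k \<in> carrier (C p)"
  then show "f \<otimes>\<^bsub>C p\<^esub> h \<otimes>\<^bsub>C p\<^esub> k = f \<otimes>\<^bsub>C p\<^esub> (h \<otimes>\<^bsub>C p\<^esub> k)"
    using comm_group_G by (auto intro!: ext simp: mult_C one_C cochainsD comm_group_def group.is_monoid monoid.m_assoc)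
next
  fix f h assume "f \<in> carrier (C p)" "h \<in> carrier (C p)"
  then show "f \<otimes>\<^bsub>C p\<^esub> h = h \<otimes>\<^bsub>C p\<^esub> f" and "f \<otimes>\<^bsub>C p\<^esub> h \<in> carrier (C p)"
    using comm_group_G by (auto intro!: ext cochainsI simp: mult_C one_C cochainsD
        comm_group_def group.is_monoid comm_monoid.m_comm monoid.m_closed)
next
  fix f assume "f \<in> carrier (C p)"
  then show "\<one>\<^bsub>C p\<^esub> \<otimes>\<^bsub>C p\<^esub> f = f"
    using comm_group_G by (auto intro!: ext simp: mult_C one_C cochainsD cochains_undefined comm_group_def group.is_monoid)
next
  show "\<one>\<^bsub>C p\<^esub> \<in> carrier (C p)"
    using comm_group_G by (auto intro!: cochainsI simp: one_C comm_group_def group.is_monoid)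
next
  fix f assume f: "f \<in> carrier (C p)"
  let ?g = "\<lambda>n x. if x \<in> K n then inv\<^bsub>G (n - p)\<^esub> (f n x) else undefined"
  have "?g \<in> carrier (C p) \<and> ?g \<otimes>\<^bsub>C p\<^esub> f = \<one>\<^bsub>C p\<^esub>"
    using f comm_group_G by (auto intro!: ext cochainsI simp: mult_C one_C cochainsD comm_group_def group.l_inv)
  then show "\<exists>g\<in>carrier (C p). g \<otimes>\<^bsub>C p\<^esub> f = \<one>\<^bsub>C p\<^esub>" by blast
qed

lemma group_C: "group (C p)"
  using comm_group_C by (rule comm_group.axioms(2))

lemma finite_cochains: "finite (cochains K G p)"
proof -
  let ?I = "SIGMA n:{n. K n \<noteq> {}}. K n"
  have "inj_on (\<lambda>f. \<lambda>(n, x)\<in>?I. f n x) (cochains K G p)"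
  proof (rule inj_onI, intro ext)
    fix f h n x
    assume f: "f \<in> cochains K G p" and h: "h \<in> cochains K G p"
      and eq: "(\<lambda>(n, x)\<in>?I. f n x) = (\<lambda>(n, x)\<in>?I. h n x)"
    show "f n x = h n x"
    proof (cases "x \<in> K n")
      case True
      then have "(n, x) \<in> ?I" by auto
      then show ?thesis using fun_cong[OF eq, of "(n, x)"] by simp
    next
      case False
      then show ?thesis using f h by (simp add: cochains_undefined)
    qed
  qed
  moreover have "(\<lambda>f. \<lambda>(n, x)\<in>?I. f n x) ` cochains K G p \<subseteq> PiE ?I (\<lambda>(n, x). carrier (G (n - p)))"
    by (auto simp: mult_C one_C cochainsD PiE_def extensional_def split: if_splits)
  moreover have "finite (PiE ?I (\<lambda>(n, x). carrier (G (n - p))))"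
    using finite_degrees finite_K finite_G by (intro finite_PiE) auto
  ultimately show ?thesis by (meson finite_imageD finite_subset)
qed

lemma coboundary_apply:
  "x \<in> K n \<Longrightarrow> \<delta> p f n x =
    (\<Otimes>\<^bsub>G (n - p - 1)\<^esub> y\<in>K (n - 1). f (n - 1) y [^]\<^bsub>G (n - p - 1)\<^esub> d n x y)
    \<otimes>\<^bsub>G (n - p - 1)\<^esub> dG (n - p) (f n x) [^]\<^bsub>G (n - p - 1)\<^esub> (- sign_pow p)"
  by (simp add: coboundary_def)

lemma coboundary_closed:
  assumes f: "f \<in> cochains K G p"
  shows "\<delta> p f \<in> cochains K G (p + 1)"
proof (rule cochainsI)
  fix n x assume x: "x \<in> K n"
  interpret R: comm_group "G (n - p - 1)" by (rule comm_group_G)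
  have idx: "n - 1 - p = n - p - 1" "n - (p + 1) = n - p - 1" by simp_all
  have "f (n - 1) y \<in> carrier (G (n - p - 1))" if "y \<in> K (n - 1)" for y
    using cochainsD[OF f that] by (simp only: idx)
  moreover have "dG (n - p) (f n x) \<in> carrier (G (n - p - 1))"
    using dG_closed[OF cochainsD[OF f x]] .
  ultimately show "\<delta> p f n x \<in> carrier (G (n - (p + 1)))"
    unfolding coboundary_def idx using x by (auto intro!: R.finprod_closed)
qed (simp add: coboundary_def)

lemma coboundary_hom: "\<delta> p \<in> hom (C p) (C (p + 1))"
proof (rule homI)
  fix f g assume f: "f \<in> carrier (C p)" and g: "g \<in> carrier (C p)"
  show "\<delta> p (f \<otimes>\<^bsub>C p\<^esub> g) = \<delta> p f \<otimes>\<^bsub>C (p + 1)\<^esub> \<delta> p g"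
  proof (intro ext)
    fix n x
    show "\<delta> p (f \<otimes>\<^bsub>C p\<^esub> g) n x = (\<delta> p f \<otimes>\<^bsub>C (p + 1)\<^esub> \<delta> p g) n x"
    proof (cases "x \<in> K n")
      case x: True
      interpret R: comm_group "G (n - p - 1)" by (rule comm_group_G)
      have idx: "n - 1 - p = n - p - 1" "n - (p + 1) = n - p - 1" by simp_all
      have prev: "h (n - 1) y \<in> carrier (G (n - p - 1))" if "h \<in> cochains K G p" "y \<in> K (n - 1)" for h y
        using cochainsD[OF that] by (simp only: idx)
      have top: "dG (n - p) (h n x) \<in> carrier (G (n - p - 1))" if "h \<in> cochains K G p" for h
        using dG_closed[OF cochainsD[OF that x]] .
      have "(\<Otimes>\<^bsub>G (n - p - 1)\<^esub> y\<in>K (n - 1). (f \<otimes>\<^bsub>C p\<^esub> g) (n - 1) y [^]\<^bsub>G (n - p - 1)\<^esub> d n x y)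
          = (\<Otimes>\<^bsub>G (n - p - 1)\<^esub> y\<in>K (n - 1). f (n - 1) y [^]\<^bsub>G (n - p - 1)\<^esub> d n x y
              \<otimes>\<^bsub>G (n - p - 1)\<^esub> g (n - 1) y [^]\<^bsub>G (n - p - 1)\<^esub> d n x y)"
        (is "?L = _")
        using prev f g by (intro R.finprod_cong') (auto simp: mult_C idx R.int_pow_distrib)
      also have "\<dots> = (\<Otimes>\<^bsub>G (n - p - 1)\<^esub> y\<in>K (n - 1). f (n - 1) y [^]\<^bsub>G (n - p - 1)\<^esub> d n x y)
            \<otimes>\<^bsub>G (n - p - 1)\<^esub> (\<Otimes>\<^bsub>G (n - p - 1)\<^esub> y\<in>K (n - 1). g (n - 1) y [^]\<^bsub>G (n - p - 1)\<^esub> d n x y)"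
        (is "_ = ?R")
        using prev f g by (intro R.finprod_multf) auto
      finally have "?L = ?R" .
      moreover have "dG (n - p) ((f \<otimes>\<^bsub>C p\<^esub> g) n x) = dG (n - p) (f n x) \<otimes>\<^bsub>G (n - p - 1)\<^esub> dG (n - p) (g n x)"
        using cochainsD f g x by (simp add: mult_C dG_mult)
      ultimately show ?thesis
        using x prev top f g
        by (simp add: coboundary_def mult_C idx R.int_pow_distrib R.m_ac Pi_def)
    qed (simp add: coboundary_def mult_C)
  qed
qed (use coboundary_closed in auto)

lemma group_hom_coboundary: "group_hom (C p) (C (p + 1)) (\<delta> p)"
  using coboundary_hom group_C by (simp add: group_hom_def group_hom_axioms_def)

lemma dG_coboundary:
  assumes t: "t \<in> cochains K G p" and x: "x \<in> K n"
  shows "dG (n - p - 1) (\<delta> p t n x)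
    = (\<Otimes>\<^bsub>G (n - p - 2)\<^esub> y\<in>K (n - 1). dG (n - p - 1) (t (n - 1) y) [^]\<^bsub>G (n - p - 2)\<^esub> d n x y)"
proof -
  interpret R: comm_group "G (n - p - 2)" by (rule comm_group_G)
  interpret S: comm_group "G (n - p - 1)" by (rule comm_group_G)
  have idx: "n - 1 - p = n - p - 1" "n - p - 1 - 1 = n - p - 2" by simp_all
  have t_prev: "t (n - 1) y \<in> carrier (G (n - p - 1))" if "y \<in> K (n - 1)" for y
    using cochainsD[OF t that] by (simp only: idx)
  have tx: "t n x \<in> carrier (G (n - p))" using cochainsD[OF t x] .
  have "(\<lambda>y. t (n - 1) y [^]\<^bsub>G (n - p - 1)\<^esub> d n x y) \<in> K (n - 1) \<rightarrow> carrier (G (n - p - 1))"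
    using t_prev by auto
  then have "dG (n - p - 1) (\<delta> p t n x)
      = (\<Otimes>\<^bsub>G (n - p - 2)\<^esub> y\<in>K (n - 1). dG (n - p - 1) (t (n - 1) y [^]\<^bsub>G (n - p - 1)\<^esub> d n x y))
        \<otimes>\<^bsub>G (n - p - 2)\<^esub> dG (n - p - 1) (dG (n - p) (t n x)) [^]\<^bsub>G (n - p - 2)\<^esub> (- sign_pow p)"
    using dG_closed[OF tx] by (simp add: coboundary_apply[OF x] dG_mult dG_finprod dG_int_pow S.finprod_closed idx)
  also have "(\<Otimes>\<^bsub>G (n - p - 2)\<^esub> y\<in>K (n - 1). dG (n - p - 1) (t (n - 1) y [^]\<^bsub>G (n - p - 1)\<^esub> d n x y))
      = (\<Otimes>\<^bsub>G (n - p - 2)\<^esub> y\<in>K (n - 1). dG (n - p - 1) (t (n - 1) y) [^]\<^bsub>G (n - p - 2)\<^esub> d n x y)"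
    using t_prev dG_closed[OF t_prev] by (intro R.finprod_cong') (auto simp: dG_int_pow idx)
  also have "dG (n - p - 1) (dG (n - p) (t n x)) = \<one>\<^bsub>G (n - p - 2)\<^esub>"
    using dG_dG[OF tx] by (simp add: idx)
  finally show ?thesis using dG_closed[OF t_prev] by (simp add: idx Pi_def)
qed

lemma coboundary_coboundary:
  assumes t: "t \<in> cochains K G p"
  shows "\<delta> (p + 1) (\<delta> p t) = \<one>\<^bsub>C (p + 2)\<^esub>"
proof (intro ext)
  fix n x
  show "\<delta> (p + 1) (\<delta> p t) n x = \<one>\<^bsub>C (p + 2)\<^esub> n x"
  proof (cases "x \<in> K n")
    case x: True
    interpret R: comm_group "G (n - p - 2)" by (rule comm_group_G)
    have idx: "n - (p + 1) - 1 = n - p - 2" "n - 1 - p - 1 = n - p - 2" "n - 1 - 1 = n - 2"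
      "n - 1 - p = n - p - 1" "n - (p + 1) = n - p - 1" "n - 2 - p = n - p - 2"
      "n - p - 1 - 1 = n - p - 2" "n - (p + 2) = n - p - 2"
      by simp_all
    define s where "s = - sign_pow p"
    define e where "e = d n x"
    define P where "P y = (\<Otimes>\<^bsub>G (n - p - 2)\<^esub> z\<in>K (n - 2). t (n - 2) z [^]\<^bsub>G (n - p - 2)\<^esub> d (n - 1) y z)" for y
    define Q where "Q y = dG (n - p - 1) (t (n - 1) y)" for y
    define W where "W = (\<Otimes>\<^bsub>G (n - p - 2)\<^esub> y\<in>K (n - 1). Q y [^]\<^bsub>G (n - p - 2)\<^esub> e y)"
    have t_prev: "t (n - 1) y \<in> carrier (G (n - p - 1))" if "y \<in> K (n - 1)" for y
      using cochainsD[OF t that] by (simp only: idx)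
    have t_prev2: "t (n - 2) z \<in> carrier (G (n - p - 2))" if "z \<in> K (n - 2)" for z
      using cochainsD[OF t that] by (simp only: idx)
    have Q: "Q y \<in> carrier (G (n - p - 2))" if "y \<in> K (n - 1)" for y
      unfolding Q_def using dG_closed[OF t_prev[OF that]] by (simp only: idx)
    have P: "P y \<in> carrier (G (n - p - 2))" for y
      unfolding P_def using t_prev2 by (auto intro!: R.finprod_closed)
    have W: "W \<in> carrier (G (n - p - 2))" unfolding W_def using Q by (auto intro!: R.finprod_closed)
    have inner: "\<delta> p t (n - 1) y = P y \<otimes>\<^bsub>G (n - p - 2)\<^esub> Q y [^]\<^bsub>G (n - p - 2)\<^esub> s" if "y \<in> K (n - 1)" for y
      using that unfolding coboundary_def P_def Q_def s_def by (simp add: idx)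
    have outer: "dG (n - p - 1) (\<delta> p t n x) = W"
      unfolding W_def Q_def e_def by (rule dG_coboundary[OF t x])
    txt \<open>The \<open>\<partial>\<^sup>C\<partial>\<^sup>C\<close> part vanishes, and the two \<open>\<partial>\<^sup>G\<close> parts \<open>W\<^sup>s\<close> and \<open>W\<^sup>-\<^sup>s\<close> cancel
      because \<open>(-1)\<^sup>p\<^sup>+\<^sup>1 = -(-1)\<^sup>p\<close>.\<close>
    have "\<delta> (p + 1) (\<delta> p t) n x
        = (\<Otimes>\<^bsub>G (n - p - 2)\<^esub> y\<in>K (n - 1). \<delta> p t (n - 1) y [^]\<^bsub>G (n - p - 2)\<^esub> e y)
          \<otimes>\<^bsub>G (n - p - 2)\<^esub> dG (n - p - 1) (\<delta> p t n x) [^]\<^bsub>G (n - p - 2)\<^esub> (- s)"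
      using coboundary_apply[OF x, of "p + 1" "\<delta> p t"] unfolding e_def s_def
      by (simp only: idx sign_pow_succ)
    also have "(\<Otimes>\<^bsub>G (n - p - 2)\<^esub> y\<in>K (n - 1). \<delta> p t (n - 1) y [^]\<^bsub>G (n - p - 2)\<^esub> e y)
        = (\<Otimes>\<^bsub>G (n - p - 2)\<^esub> y\<in>K (n - 1). P y [^]\<^bsub>G (n - p - 2)\<^esub> e y \<otimes>\<^bsub>G (n - p - 2)\<^esub> (Q y [^]\<^bsub>G (n - p - 2)\<^esub> e y) [^]\<^bsub>G (n - p - 2)\<^esub> s)"
      using P Q by (intro R.finprod_cong') (auto simp: inner R.int_pow_distrib R.int_pow_pow mult.commute)
    also have "\<dots> = (\<Otimes>\<^bsub>G (n - p - 2)\<^esub> y\<in>K (n - 1). P y [^]\<^bsub>G (n - p - 2)\<^esub> e y) \<otimes>\<^bsub>G (n - p - 2)\<^esub> W [^]\<^bsub>G (n - p - 2)\<^esub> s"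
      using P Q unfolding W_def by (simp add: Pi_def R.finprod_int_pow)
    also have "(\<Otimes>\<^bsub>G (n - p - 2)\<^esub> y\<in>K (n - 1). P y [^]\<^bsub>G (n - p - 2)\<^esub> e y) = \<one>\<^bsub>G (n - p - 2)\<^esub>"
      unfolding P_def e_def using t_prev2 boundary_boundary[OF x]
      by (intro R.finprod_boundary_boundary) (auto simp: mult.commute)
    finally show ?thesis using W x outer by (simp add: one_C idx R.int_pow_mult[symmetric])
  qed (simp add: coboundary_def one_C)
qed

section \<open>Zeroth cohomology and its characters\<close>

abbreviation "Z \<equiv> cocycles0 K d G dG"
abbreviation "B \<equiv> coboundaries0 K d G dG"
abbreviation "H0 \<equiv> H0_group K d G dG"
abbreviation "ker\<delta>\<^sub>0 \<equiv> ker_dual0 K d G dG"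

lemma subgroup_cocycles: "subgroup Z (C 0)"
  using group_hom.subgroup_kernel[OF group_hom_coboundary[of 0]]
  by (simp add: cocycles0_def kernel_def)

lemma subgroup_coboundaries: "subgroup B (C 0)"
  using group_hom.img_is_subgroup[OF group_hom_coboundary[of "-1"]]
  by (simp add: coboundaries0_def)

lemma coboundaries_subset_cocycles: "B \<subseteq> Z"
  using coboundary_coboundary[of _ "-1"] coboundary_closed[of _ "-1"]
  by (auto simp: coboundaries0_def cocycles0_def)

lemma cocycles_subset: "Z \<subseteq> cochains K G 0"
  by (auto simp: cocycles0_def)

lemma normal_coboundaries: "B \<lhd> (C 0)\<lparr>carrier := Z\<rparr>"
proof -
  have "comm_group ((C 0)\<lparr>carrier := Z\<rparr>)"
    using comm_monoid.m_comm[OF comm_group.axioms(1)[OF comm_group_C]] cocycles_subset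
    by (intro group.group_comm_groupI[OF group.subgroup_imp_group[OF group_C subgroup_cocycles]]) auto
  moreover have "subgroup B ((C 0)\<lparr>carrier := Z\<rparr>)"
    using group.subgroup_incl[OF group_C subgroup_coboundaries subgroup_cocycles coboundaries_subset_cocycles] .
  ultimately show ?thesis by (rule comm_group.subgroup_imp_normal)
qed

lemma carrier_H0: "carrier H0 = (\<lambda>f. B #>\<^bsub>C 0\<^esub> f) ` Z"
  by (simp add: H0_group_def carrier_FactGroup r_coset_def)

lemma mult_H0:
  "f \<in> Z \<Longrightarrow> g \<in> Z \<Longrightarrow> (B #>\<^bsub>C 0\<^esub> f) \<otimes>\<^bsub>H0\<^esub> (B #>\<^bsub>C 0\<^esub> g) = B #>\<^bsub>C 0\<^esub> (f \<otimes>\<^bsub>C 0\<^esub> g)"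
  using normal.rcos_sum[OF normal_coboundaries] by (simp add: H0_group_def r_coset_def)

lemma group_H0: "group H0"
  unfolding H0_group_def by (rule normal.factorgroup_is_group[OF normal_coboundaries])

lemma ker_dual0_iff:
  "m \<in> ker\<delta>\<^sub>0 \<longleftrightarrow> m \<in> characters (C 0) \<and> (\<forall>b\<in>B. m b = 1)"
  by (auto simp: ker_dual0_def coboundaries0_def)

lemma ker_dual0_mult:
  "m \<in> ker\<delta>\<^sub>0 \<Longrightarrow> f \<in> cochains K G 0 \<Longrightarrow> g \<in> cochains K G 0 \<Longrightarrow>
    m (f \<otimes>\<^bsub>C 0\<^esub> g) = m f * m g"
  unfolding ker_dual0_iff characters_iff character_on_def carrier_C by blast

lemma ker_dual0_norm: "m \<in> ker\<delta>\<^sub>0 \<Longrightarrow> f \<in> cochains K G 0 \<Longrightarrow> cmod (m f) = 1"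
  unfolding ker_dual0_iff characters_iff character_on_def carrier_C by blast

lemma ker_dual0_rcoset:
  assumes m: "m \<in> ker\<delta>\<^sub>0" and f: "f \<in> cochains K G 0" and g: "g \<in> B #>\<^bsub>C 0\<^esub> f"
  shows "m g = m f"
proof -
  obtain b where b: "b \<in> B" and "g = b \<otimes>\<^bsub>C 0\<^esub> f" using g unfolding r_coset_def by blast
  moreover have "b \<in> cochains K G 0" using b coboundaries_subset_cocycles cocycles_subset by blast
  ultimately show ?thesis using m f ker_dual0_mult[OF m] by (simp add: ker_dual0_iff)
qed

lemma mbar_rcoset:
  assumes m: "m \<in> ker\<delta>\<^sub>0" and f: "f \<in> Z"
  shows "mbar K d G dG m (B #>\<^bsub>C 0\<^esub> f) = m f"
proof -
  have fC: "f \<in> cochains K G 0" using f cocycles_subset by blast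
  then have "f \<in> B #>\<^bsub>C 0\<^esub> f" using group.rcos_self[OF group_C _ subgroup_coboundaries] by simp
  then have "(SOME g. g \<in> B #>\<^bsub>C 0\<^esub> f) \<in> B #>\<^bsub>C 0\<^esub> f"
    by (rule someI[of "\<lambda>g. g \<in> B #>\<^bsub>C 0\<^esub> f"])
  then show ?thesis using f ker_dual0_rcoset[OF m fC] unfolding mbar_def carrier_H0 by simp
qed

lemma mbar_character:
  assumes m: "m \<in> ker\<delta>\<^sub>0"
  shows "mbar K d G dG m \<in> characters H0"
  unfolding characters_iff character_on_def
proof (intro conjI ballI)
  fix c assume "c \<in> carrier H0"
  then obtain f where f: "f \<in> Z" and c: "c = B #>\<^bsub>C 0\<^esub> f" unfolding carrier_H0 by blast
  show "cmod (mbar K d G dG m c) = 1"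
    using f cocycles_subset ker_dual0_norm[OF m] unfolding c mbar_rcoset[OF m f] by blast
next
  fix c c' assume "c \<in> carrier H0" "c' \<in> carrier H0"
  then obtain f f' where f: "f \<in> Z" "f' \<in> Z" and c: "c = B #>\<^bsub>C 0\<^esub> f" "c' = B #>\<^bsub>C 0\<^esub> f'"
    unfolding carrier_H0 by blast
  have ff': "f \<otimes>\<^bsub>C 0\<^esub> f' \<in> Z" using subgroup.m_closed[OF subgroup_cocycles f] .
  have "m (f \<otimes>\<^bsub>C 0\<^esub> f') = m f * m f'"
    using f cocycles_subset ker_dual0_mult[OF m] by blast
  then show "mbar K d G dG m (c \<otimes>\<^bsub>H0\<^esub> c') = mbar K d G dG m c * mbar K d G dG m c'"
    unfolding c mult_H0[OF f] mbar_rcoset[OF m ff'] mbar_rcoset[OF m f(1)] mbar_rcoset[OF m f(2)] .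
qed (simp add: mbar_def)

lemma mbar_eq_iff:
  assumes m: "m \<in> ker\<delta>\<^sub>0" and m': "m' \<in> ker\<delta>\<^sub>0"
  shows "mbar K d G dG m = mbar K d G dG m' \<longleftrightarrow> (\<forall>f\<in>Z. m f = m' f)"
proof
  assume "mbar K d G dG m = mbar K d G dG m'"
  then show "\<forall>f\<in>Z. m f = m' f" by (metis mbar_rcoset[OF m] mbar_rcoset[OF m'])
next
  assume agree: "\<forall>f\<in>Z. m f = m' f"
  show "mbar K d G dG m = mbar K d G dG m'"
  proof
    fix c
    show "mbar K d G dG m c = mbar K d G dG m' c"
    proof (cases "c \<in> carrier H0")
      case True
      then obtain f where "f \<in> Z" "c = B #>\<^bsub>C 0\<^esub> f" unfolding carrier_H0 by blast
      then show ?thesis using agree by (simp add: mbar_rcoset[OF m] mbar_rcoset[OF m'])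
    qed (simp add: mbar_def)
  qed
qed

lemma characters_H0_subset_mbar_image: "characters H0 \<subseteq> mbar K d G dG ` ker\<delta>\<^sub>0"
proof
  fix \<chi> assume \<chi>: "\<chi> \<in> characters H0"
  then have \<chi>_char: "character_on H0 (carrier H0) \<chi>" and \<chi>_ext: "\<chi> \<in> extensional (carrier H0)"
    unfolding characters_iff by blast+
  define \<psi> where "\<psi> f = \<chi> (B #>\<^bsub>C 0\<^esub> f)" for f
  have \<psi>: "character_on (C 0) Z \<psi>"
    using \<chi>_char mult_H0 unfolding character_on_def \<psi>_def carrier_H0 by (simp add: subgroup.m_closed[OF subgroup_cocycles])
  then obtain \<chi>\<^sub>0 where \<chi>\<^sub>0: "character_on (C 0) (carrier (C 0)) \<chi>\<^sub>0" "\<forall>f\<in>Z. \<chi>\<^sub>0 f = \<psi> f"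
    using comm_group.character_on_extend[OF comm_group_C _ subgroup_cocycles \<psi>] finite_cochains by auto
  define m where "m = restrict \<chi>\<^sub>0 (cochains K G 0)"
  have \<chi>_one: "\<chi> B = 1"
    using group.character_on_one[OF group_H0 group.subgroup_self[OF group_H0] \<chi>_char]
    by (simp add: H0_group_def)
  have "m \<in> characters (C 0)"
    using \<chi>\<^sub>0(1) monoid.m_closed[OF group.is_monoid[OF group_C], of _ 0]
    unfolding characters_iff character_on_def m_def by auto
  moreover have "m b = 1" if b: "b \<in> B" for b
  proof -
    have "b \<in> Z" "b \<in> cochains K G 0" using b coboundaries_subset_cocycles cocycles_subset by blast+
    moreover have "B #>\<^bsub>C 0\<^esub> b = B" using subgroup.rcos_const[OF subgroup_coboundaries group_C b] .
    ultimately show ?thesis using \<chi>\<^sub>0(2) \<chi>_one by (simp add: m_def \<psi>_def)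
  qed
  ultimately have m: "m \<in> ker\<delta>\<^sub>0" unfolding ker_dual0_iff by blast
  have "mbar K d G dG m = \<chi>"
  proof
    fix c
    show "mbar K d G dG m c = \<chi> c"
    proof (cases "c \<in> carrier H0")
      case True
      then obtain f where f: "f \<in> Z" and c: "c = B #>\<^bsub>C 0\<^esub> f" unfolding carrier_H0 by blast
      then have "mbar K d G dG m c = m f" using mbar_rcoset[OF m f] by simp
      also have "\<dots> = \<chi> c" using \<chi>\<^sub>0(2) f c cocycles_subset by (auto simp: m_def \<psi>_def)
      finally show ?thesis .
    qed (use \<chi>_ext in \<open>simp add: mbar_def extensional_def\<close>)
  qed
  with m show "\<chi> \<in> mbar K d G dG ` ker\<delta>\<^sub>0" by blast
qed

lemma mbar_image: "mbar K d G dG ` ker\<delta>\<^sub>0 = characters H0"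
  using mbar_character characters_H0_subset_mbar_image by blast

section \<open>Ground states\<close>

lemma A0_ket_eigenvector:
  assumes m: "m \<in> ker\<delta>\<^sub>0" and f: "f \<in> cochains K G 0"
  shows "Qop (cochains K G 0) m (A0 K d G dG (ket f)) = (\<lambda>g. m f * A0 K d G dG (ket f) g)"
proof
  fix g
  show "Qop (cochains K G 0) m (A0 K d G dG (ket f)) g = m f * A0 K d G dG (ket f) g"
  proof (cases "g \<in> cochains K G 0")
    case g: True
    have "m g * Pop (C 0) (\<delta> (-1) t) (ket f) g = m f * Pop (C 0) (\<delta> (-1) t) (ket f) g"
      if t: "t \<in> cochains K G (-1)" for t
    proof (cases "g \<otimes>\<^bsub>C 0\<^esub> inv\<^bsub>C 0\<^esub> \<delta> (-1) t = f")
      case True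
      have \<delta>t: "\<delta> (-1) t \<in> B" "\<delta> (-1) t \<in> cochains K G 0"
        using t coboundary_closed[OF t] by (auto simp: coboundaries0_def)
      then have "g = f \<otimes>\<^bsub>C 0\<^esub> \<delta> (-1) t"
        using True f g group.inv_solve_right'[OF group_C] by simp
      then have "m g = m f"
        using ker_dual0_mult[OF m f \<delta>t(2)] m \<delta>t(1) by (simp add: ker_dual0_iff)
      then show ?thesis by simp
    qed (simp add: Pop_def ket_def)
    then have "(\<Sum>t\<in>cochains K G (-1). m g * Pop (C 0) (\<delta> (-1) t) (ket f) g)
        = (\<Sum>t\<in>cochains K G (-1). m f * Pop (C 0) (\<delta> (-1) t) (ket f) g)"
      by (rule sum.cong[OF refl])
    then show ?thesis using g by (simp add: Qop_def A0_def sum_distrib_left)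
  qed (simp add: Qop_def A0_def Pop_def)
qed

lemma A0_ket_nonzero:
  assumes f: "f \<in> cochains K G 0"
  shows "A0 K d G dG (ket f) f \<noteq> 0"
proof -
  let ?T = "cochains K G (-1)"
  let ?S = "?T \<inter> {t. f \<otimes>\<^bsub>C 0\<^esub> inv\<^bsub>C 0\<^esub> \<delta> (-1) t = f}"
  have "(\<Sum>t\<in>?T. Pop (C 0) (\<delta> (-1) t) (ket f) f) = (\<Sum>t\<in>?T. of_bool (f \<otimes>\<^bsub>C 0\<^esub> inv\<^bsub>C 0\<^esub> \<delta> (-1) t = f))"
    using f by (intro sum.cong) (auto simp: Pop_def ket_def)
  also have "\<dots> = of_nat (card ?S)" using finite_cochains by simp
  finally have sum: "(\<Sum>t\<in>?T. Pop (C 0) (\<delta> (-1) t) (ket f) f) = of_nat (card ?S)" .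
  have "\<delta> (-1) \<one>\<^bsub>C (-1)\<^esub> = \<one>\<^bsub>C 0\<^esub>"
    using group_hom.hom_one[OF group_hom_coboundary[of "-1"]] by simp
  then have one: "\<one>\<^bsub>C (-1)\<^esub> \<in> ?S"
    using f group.is_monoid[OF group_C, of 0] monoid.one_closed[OF group.is_monoid[OF group_C, of "-1"]]
    by (simp add: monoid.inv_one monoid.r_one)
  then have "card ?S \<noteq> 0" "card ?T \<noteq> 0" using finite_cochains by auto
  then show ?thesis using sum unfolding A0_def by simp
qed

lemma same_ground_eigenvalue_iff:
  assumes m: "m \<in> ker\<delta>\<^sub>0" and m': "m' \<in> ker\<delta>\<^sub>0"
  shows "same_ground_eigenvalue K d G dG (Qop (cochains K G 0) m) (Qop (cochains K G 0) m')
    \<longleftrightarrow> (\<forall>f\<in>Z. m f = m' f)"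
proof
  assume same: "same_ground_eigenvalue K d G dG (Qop (cochains K G 0) m) (Qop (cochains K G 0) m')"
  show "\<forall>f\<in>Z. m f = m' f"
  proof
    fix f assume "f \<in> Z"
    then have f: "f \<in> cochains K G 0" using cocycles_subset by blast
    obtain c where c: "Qop (cochains K G 0) m (A0 K d G dG (ket f)) = (\<lambda>g. c * A0 K d G dG (ket f) g)"
      "Qop (cochains K G 0) m' (A0 K d G dG (ket f)) = (\<lambda>g. c * A0 K d G dG (ket f) g)"
      using same \<open>f \<in> Z\<close> unfolding same_ground_eigenvalue_def by blast
    have "m f * A0 K d G dG (ket f) f = c * A0 K d G dG (ket f) f"
      using fun_cong[OF c(1), of f] A0_ket_eigenvector[OF m f] by simp
    moreover have "m' f * A0 K d G dG (ket f) f = c * A0 K d G dG (ket f) f"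
      using fun_cong[OF c(2), of f] A0_ket_eigenvector[OF m' f] by simp
    ultimately show "m f = m' f" using A0_ket_nonzero[OF f] by simp
  qed
next
  assume agree: "\<forall>f\<in>Z. m f = m' f"
  show "same_ground_eigenvalue K d G dG (Qop (cochains K G 0) m) (Qop (cochains K G 0) m')"
    unfolding same_ground_eigenvalue_def
  proof (intro ballI exI conjI)
    fix f assume "f \<in> Z"
    then have f: "f \<in> cochains K G 0" using cocycles_subset by blast
    show "Qop (cochains K G 0) m (A0 K d G dG (ket f)) = (\<lambda>g. m f * A0 K d G dG (ket f) g)"
      by (rule A0_ket_eigenvector[OF m f])
    show "Qop (cochains K G 0) m' (A0 K d G dG (ket f)) = (\<lambda>g. m f * A0 K d G dG (ket f) g)"
      using A0_ket_eigenvector[OF m' f] agree \<open>f \<in> Z\<close> by simp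
  qed
qed

lemma Qrel_iff:
  assumes "m \<in> ker\<delta>\<^sub>0" "m' \<in> ker\<delta>\<^sub>0"
  shows "(Qop (cochains K G 0) m, Qop (cochains K G 0) m') \<in> Qrel K d G dG
    \<longleftrightarrow> mbar K d G dG m = mbar K d G dG m'"
proof -
  have "Qop (cochains K G 0) m \<in> Qops K d G dG" "Qop (cochains K G 0) m' \<in> Qops K d G dG"
    using assms unfolding Qops_def by blast+
  then show ?thesis
    unfolding Qrel_def using same_ground_eigenvalue_iff[OF assms] mbar_eq_iff[OF assms] by simp
qed

end

theorem proposition7:
  fixes K :: "int \<Rightarrow> 'k set" and d :: "int \<Rightarrow> 'k \<Rightarrow> 'k \<Rightarrow> int"
    and G :: "int \<Rightarrow> ('g,'b) monoid_scheme" and dG :: "int \<Rightarrow> 'g \<Rightarrow> 'g"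
  assumes "chain_setting K d G dG"
  shows "(\<forall>m\<in>ker_dual0 K d G dG.
            (\<forall>f\<in>cocycles0 K d G dG. \<forall>f'\<in>cocycles0 K d G dG.
               coboundaries0 K d G dG #>\<^bsub>cochain_group K G 0\<^esub> f = coboundaries0 K d G dG #>\<^bsub>cochain_group K G 0\<^esub> f'
               \<longrightarrow> m f = m f')
            \<and> mbar K d G dG m \<in> characters (H0_group K d G dG))
       \<and> equiv (Qops K d G dG) (Qrel K d G dG)
       \<and> (\<forall>m\<in>ker_dual0 K d G dG. \<forall>m'\<in>ker_dual0 K d G dG.
            (Qop (cochains K G 0) m, Qop (cochains K G 0) m') \<in> Qrel K d G dG
            \<longrightarrow> mbar K d G dG m = mbar K d G dG m')
       \<and> (\<exists>\<Phi>. bij_betw \<Phi> (Qops K d G dG // Qrel K d G dG) (characters (H0_group K d G dG))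
              \<and> (\<forall>m\<in>ker_dual0 K d G dG. \<Phi> (Qrel K d G dG `` {Qop (cochains K G 0) m}) = mbar K d G dG m))"
proof -
  interpret cochain_complex K d G dG by (rule cochain_complex.intro) fact
  have "Qrel K d G dG \<subseteq> Qop (cochains K G 0) ` ker\<delta>\<^sub>0 \<times> Qop (cochains K G 0) ` ker\<delta>\<^sub>0"
    unfolding Qrel_def Qops_def by blast
  note quotient = quotient_bij_betw_image[OF this Qrel_iff]
  show ?thesis
  proof (intro conjI ballI impI)
    fix m f f' assume m: "m \<in> ker\<delta>\<^sub>0" and f: "f \<in> Z" "f' \<in> Z"
      and "B #>\<^bsub>C 0\<^esub> f = B #>\<^bsub>C 0\<^esub> f'"
    then show "m f = m f'" using mbar_rcoset[OF m f(1)] mbar_rcoset[OF m f(2)] by simp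
  next
    fix m assume "m \<in> ker\<delta>\<^sub>0"
    then show "mbar K d G dG m \<in> characters H0" by (rule mbar_character)
  next
    show "equiv (Qops K d G dG) (Qrel K d G dG)" unfolding Qops_def by (rule quotient(1))
  next
    fix m m' assume "m \<in> ker\<delta>\<^sub>0" "m' \<in> ker\<delta>\<^sub>0"
      and "(Qop (cochains K G 0) m, Qop (cochains K G 0) m') \<in> Qrel K d G dG"
    then show "mbar K d G dG m = mbar K d G dG m'" using Qrel_iff by blast
  next
    show "\<exists>\<Phi>. bij_betw \<Phi> (Qops K d G dG // Qrel K d G dG) (characters H0)
        \<and> (\<forall>m\<in>ker\<delta>\<^sub>0. \<Phi> (Qrel K d G dG `` {Qop (cochains K G 0) m}) = mbar K d G dG m)"
      unfolding Qops_def mbar_image[symmetric] using quotient(2,3) by blast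
  qed
qed

end
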